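(* Consider a discounted Markov decision process with Borel state space $\mathcal{S}$, action sets $\mathcal{A}(s)$ for $s\in\mathcal{S}$, transition kernel $P(\cdot\mid \alpha,s)$, bounded reward function $r(\alpha,s)$, and discount factor $\beta\in(0,1)$. Fix $\tau\in(0,1)$ and a stationary policy $\pi(\cdot\mid s)$ (a probability distribution over $\mathcal{A}(s)$ for each $s$). For bounded $V:\mathcal{S}\to\mathbb{R}$ define $$(\mathcal{T}^{\tau}_{\pi}V)(s)=Q_{\tau}\big[r(\alpha,s)+\beta V(s')\,\big|\,s\big],\quad \alpha\sim\pi(\cdot\mid s),\ s'\sim P(\cdot\mid\alpha,s),$$ $$(\mathcal{T}^{\tau}_{*}V)(s)=\max_{\alpha\in\mathcal{A}(s)} Q_{\tau}\big[r(\alpha,s)+\beta V(s')\,\big|\,s\big],\quad s'\sim P(\cdot\mid\alpha,s).$$ Then for all bounded $V,W:\mathcal{S}\to\mathbb{R}$, $$\|\mathcal{T}^{\tau}_{\pi}V-\mathcal{T}^{\tau}_{\pi}W\|_\infty\le\beta\|V-W\|_\infty,\qquad \|\mathcal{T}^{\tau}_{*}V-\mathcal{T}^{\tau}_{*}W\|_\infty\le\beta\|V-W\|_\infty.$$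
   Context: For a real random variable $Z$ with CDF $F_Z$, $Q_\tau[Z]=\inf\{x\in\mathbb{R}: F_Z(x)\ge\tau\}$; $Q_\tau[\,\cdot\mid s]$ denotes the $\tau$-quantile of the conditional law given the current state $s$ (for $\mathcal{T}^\tau_\pi$ the randomness is over both the action $\alpha\sim\pi(\cdot\mid s)$ and the next state $s'$; for $\mathcal{T}^\tau_*$ the action $\alpha$ is fixed and only $s'$ is random). The operators are taken to be well defined on bounded (measurable) functions, with the maximum over $\mathcal{A}(s)$ attained. $\|f\|_\infty=\sup_{s\in\mathcal{S}}|f(s)|$. *)

theory Defs
  imports "HOL-Probability.Probability"
begin

definition quantile :: "real \<Rightarrow> real measure \<Rightarrow> real" where
  "quantile \<tau> \<mu> = Inf {x. \<tau> \<le> measure \<mu> {..x}}"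

definition step_law ::
  "('a \<Rightarrow> 's \<Rightarrow> 's measure) \<Rightarrow> ('a \<Rightarrow> 's \<Rightarrow> real) \<Rightarrow> real \<Rightarrow> ('s \<Rightarrow> real) \<Rightarrow> 's \<Rightarrow> 'a \<Rightarrow> real measure"
  where "step_law P r \<beta> V s a = distr (P a s) borel (\<lambda>s'. r a s + \<beta> * V s')"

definition T_pi ::
  "real \<Rightarrow> ('s \<Rightarrow> 'a measure) \<Rightarrow> ('a \<Rightarrow> 's \<Rightarrow> 's measure) \<Rightarrow> ('a \<Rightarrow> 's \<Rightarrow> real) \<Rightarrow> real
     \<Rightarrow> ('s \<Rightarrow> real) \<Rightarrow> 's \<Rightarrow> real"
  where "T_pi \<tau> \<pi> P r \<beta> V s = quantile \<tau> (\<pi> s \<bind> step_law P r \<beta> V s)"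

text \<open>Quantile optimality operator: max over alpha in A(s) (written as SUP; the
  maximum is assumed attained in the theorem).\<close>
definition T_star ::
  "real \<Rightarrow> ('s \<Rightarrow> 'a set) \<Rightarrow> ('a \<Rightarrow> 's \<Rightarrow> 's measure) \<Rightarrow> ('a \<Rightarrow> 's \<Rightarrow> real) \<Rightarrow> real
     \<Rightarrow> ('s \<Rightarrow> real) \<Rightarrow> 's \<Rightarrow> real"
  where "T_star \<tau> A P r \<beta> V s = (SUP a\<in>A s. quantile \<tau> (step_law P r \<beta> V s a))"

definition supnorm :: "'s measure \<Rightarrow> ('s \<Rightarrow> real) \<Rightarrow> real" where
  "supnorm M f = (SUP s\<in>space M. \<bar>f s\<bar>)"

definition bounded_fun :: "'s measure \<Rightarrow> ('s \<Rightarrow> real) \<Rightarrow> bool" where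
  "bounded_fun M f \<longleftrightarrow> (\<exists>B. \<forall>s\<in>space M. \<bar>f s\<bar> \<le> B)"

end

theory Submission
  imports Defs
begin

text \<open>If \<open>V \<le> W + D\<close>, then \<open>r(\<alpha>,s) + \<beta> V(s') \<le> r(\<alpha>,s) + \<beta> W(s') + \<beta> D\<close> pointwise, so the
  distribution function of the \<open>W\<close>-return at \<open>x\<close> is dominated by that of the \<open>V\<close>-return at
  \<open>x + \<beta> D\<close>. This domination survives mixing over the actions drawn from \<open>\<pi>(\<cdot>|s)\<close>, and a
  \<open>\<tau>\<close>-quantile moves by at most the shift of the distribution function; for the optimality
  operator it suffices to compare the two quantiles at a maximising action.\<close>

lemma cSUP_le_cSUP_add:
  fixes f g :: "'a \<Rightarrow> real"
  assumes attained: "\<exists>a\<in>A. f a = (SUP a\<in>A. f a)"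
    and bdd: "bdd_above (g ` A)"
    and le: "\<And>a. a \<in> A \<Longrightarrow> f a \<le> g a + c"
  shows "(SUP a\<in>A. f a) \<le> (SUP a\<in>A. g a) + c"
proof -
  obtain a where a: "a \<in> A" "f a = (SUP a\<in>A. f a)" using attained by blast
  have "f a \<le> g a + c" using le[OF a(1)] .
  also have "g a \<le> (SUP a\<in>A. g a)" by (rule cSUP_upper[OF a(1) bdd])
  finally show ?thesis using a(2) by simp
qed

lemma real_distribution_of_prob_algebra:
  "\<mu> \<in> space (prob_algebra borel) \<Longrightarrow> real_distribution \<mu>"
  by (simp add: space_prob_algebra real_distribution_def real_distribution_axioms_def)

context real_distribution
begin

lemma quantile_set_nonempty:
  assumes "\<tau> < 1"
  shows "{x. \<tau> \<le> measure M {..x}} \<noteq> {}"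
proof -
  have "eventually (\<lambda>x. \<tau> < cdf M x) at_top"
    using order_tendstoD(1)[OF cdf_lim_at_top_prob assms] .
  then obtain x where "\<tau> < cdf M x" by (auto simp: eventually_at_top_linorder)
  then show ?thesis by (auto simp: cdf_def2 intro: less_imp_le)
qed

lemma quantile_set_bdd_below:
  assumes "0 < \<tau>"
  shows "bdd_below {x. \<tau> \<le> measure M {..x}}"
proof -
  have "eventually (\<lambda>x. cdf M x < \<tau>) at_bot"
    using order_tendstoD(2)[OF cdf_lim_at_bot assms] .
  then obtain N where N: "\<And>x. x \<le> N \<Longrightarrow> cdf M x < \<tau>" by (auto simp: eventually_at_bot_linorder)
  have "N \<le> x" if "\<tau> \<le> measure M {..x}" for x
  proof (rule ccontr)
    assume "\<not> N \<le> x"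
    then have "cdf M x < \<tau>" using N by simp
    with that show False by (simp add: cdf_def2)
  qed
  then show ?thesis by (intro bdd_belowI[where m=N]) auto
qed

lemma quantile_le:
  assumes "0 < \<tau>" "\<tau> \<le> measure M {..x}"
  shows "quantile \<tau> M \<le> x"
  unfolding quantile_def using assms by (intro cInf_lower quantile_set_bdd_below) auto

end

lemma quantile_le_quantile_add:
  fixes \<mu> \<nu> :: "real measure"
  assumes \<mu>: "real_distribution \<mu>" and \<nu>: "real_distribution \<nu>" and \<tau>: "0 < \<tau>" "\<tau> < 1"
    and shift: "\<And>x. measure \<nu> {..x} \<le> measure \<mu> {..x + c}"
  shows "quantile \<tau> \<mu> \<le> quantile \<tau> \<nu> + c"
proof -
  have "quantile \<tau> \<mu> - c \<le> quantile \<tau> \<nu>"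
    unfolding quantile_def
  proof (rule cInf_greatest[OF real_distribution.quantile_set_nonempty[OF \<nu> \<tau>(2)]])
    fix y assume "y \<in> {x. \<tau> \<le> measure \<nu> {..x}}"
    then have "\<tau> \<le> measure \<mu> {..y + c}" using shift[of y] by simp
    then have "quantile \<tau> \<mu> \<le> y + c" by (rule real_distribution.quantile_le[OF \<mu> \<tau>(1)])
    then show "Inf {x. \<tau> \<le> measure \<mu> {..x}} - c \<le> y" by (simp add: quantile_def)
  qed
  then show ?thesis by simp
qed

lemma measure_bind_mono:
  assumes \<pi>: "\<pi> \<in> space (prob_algebra N)"
    and k: "k \<in> N \<rightarrow>\<^sub>M prob_algebra L" and k': "k' \<in> N \<rightarrow>\<^sub>M prob_algebra L"
    and sets: "X \<in> sets L" "Y \<in> sets L"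
    and le: "\<And>a. a \<in> space N \<Longrightarrow> measure (k a) X \<le> measure (k' a) Y"
  shows "measure (\<pi> \<bind> k) X \<le> measure (\<pi> \<bind> k') Y"
proof -
  have space_\<pi>: "space \<pi> = space N"
    using \<pi> by (intro sets_eq_imp_space_eq) (simp add: space_prob_algebra)
  have "emeasure (k a) X \<le> emeasure (k' a) Y" if "a \<in> space N" for a
  proof -
    have "prob_space (k a)" "prob_space (k' a)"
      using measurable_space[OF k that] measurable_space[OF k' that] by (auto simp: space_prob_algebra)
    then show ?thesis
      using le[OF that] by (simp add: finite_measure.emeasure_eq_measure prob_space.finite_measure)
  qed
  then have "(\<integral>\<^sup>+a. emeasure (k a) X \<partial>\<pi>) \<le> (\<integral>\<^sup>+a. emeasure (k' a) Y \<partial>\<pi>)"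
    by (intro nn_integral_mono) (simp add: space_\<pi>)
  then have "emeasure (\<pi> \<bind> k) X \<le> emeasure (\<pi> \<bind> k') Y"
    by (simp add: emeasure_bind_prob_algebra[OF \<pi> k sets(1)] emeasure_bind_prob_algebra[OF \<pi> k' sets(2)])
  then show ?thesis
    using prob_space_bind'[OF \<pi> k] prob_space_bind'[OF \<pi> k']
    by (simp add: finite_measure.emeasure_eq_measure prob_space.finite_measure)
qed

lemma step_law_kernel:
  assumes "(\<lambda>a. P a s) \<in> Act \<rightarrow>\<^sub>M prob_algebra M"
    and [measurable]: "(\<lambda>a. r a s) \<in> borel_measurable Act" "U \<in> borel_measurable M"
  shows "(\<lambda>a. step_law P r \<beta> U s a) \<in> Act \<rightarrow>\<^sub>M prob_algebra borel"
  unfolding step_law_def by (rule measurable_distr_prob_space2[OF assms(1)]) measurable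

lemma measure_step_law_atMost:
  assumes P: "P a s \<in> space (prob_algebra M)" and U: "U \<in> borel_measurable M"
  shows "measure (step_law P r \<beta> U s a) {..x} = measure (P a s) {s'\<in>space M. r a s + \<beta> * U s' \<le> x}"
proof -
  have sets_P: "sets (P a s) = sets M" using P by (simp add: space_prob_algebra)
  have "(\<lambda>s'. r a s + \<beta> * U s') \<in> borel_measurable (P a s)"
    using U by (simp add: measurable_cong_sets[OF sets_P refl])
  then show ?thesis
    unfolding step_law_def using sets_eq_imp_space_eq[OF sets_P]
    by (subst measure_distr) (auto intro!: arg_cong[where f="measure (P a s)"])
qed

lemma measure_step_law_atMost_shift:
  assumes P: "P a s \<in> space (prob_algebra M)"
    and [measurable]: "U \<in> borel_measurable M" "U' \<in> borel_measurable M"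
    and le: "\<And>s'. s' \<in> space M \<Longrightarrow> U s' \<le> U' s' + D" and \<beta>: "0 \<le> \<beta>"
  shows "measure (step_law P r \<beta> U' s a) {..x} \<le> measure (step_law P r \<beta> U s a) {..x + \<beta> * D}"
proof -
  have sets_P: "sets (P a s) = sets M" and prob: "prob_space (P a s)"
    using P by (auto simp: space_prob_algebra)
  have "\<beta> * U s' \<le> \<beta> * U' s' + \<beta> * D" if "s' \<in> space M" for s'
    using mult_left_mono[OF le[OF that] \<beta>] by (simp add: distrib_left)
  then have "{s'\<in>space M. r a s + \<beta> * U' s' \<le> x} \<subseteq> {s'\<in>space M. r a s + \<beta> * U s' \<le> x + \<beta> * D}"
    by fastforce
  moreover have "{s'\<in>space M. r a s + \<beta> * U s' \<le> x + \<beta> * D} \<in> sets (P a s)"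
    unfolding sets_P by measurable
  ultimately show ?thesis
    by (simp add: measure_step_law_atMost[where P=P and a=a and s=s, OF P]
        finite_measure.finite_measure_mono[OF prob_space.finite_measure[OF prob]])
qed

lemma T_pi_le_shift:
  assumes P: "(\<lambda>a. P a s) \<in> Act \<rightarrow>\<^sub>M prob_algebra M" and r: "(\<lambda>a. r a s) \<in> borel_measurable Act"
    and \<pi>: "\<pi> s \<in> space (prob_algebra Act)"
    and U: "U \<in> borel_measurable M" and U': "U' \<in> borel_measurable M"
    and le: "\<And>s'. s' \<in> space M \<Longrightarrow> U s' \<le> U' s' + D"
    and \<beta>: "0 \<le> \<beta>" and \<tau>: "0 < \<tau>" "\<tau> < 1"
  shows "T_pi \<tau> \<pi> P r \<beta> U s \<le> T_pi \<tau> \<pi> P r \<beta> U' s + \<beta> * D"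
proof -
  note kU = step_law_kernel[where P=P and r=r and s=s, OF P r U, of \<beta>]
    and kU' = step_law_kernel[where P=P and r=r and s=s, OF P r U', of \<beta>]
  have "real_distribution (\<pi> s \<bind> step_law P r \<beta> V s)" if "V \<in> borel_measurable M" for V
    using prob_space_bind'[OF \<pi> step_law_kernel[where P=P and r=r and s=s, OF P r that]]
      sets_bind'[OF \<pi> step_law_kernel[where P=P and r=r and s=s, OF P r that]]
    by (simp add: real_distribution_def real_distribution_axioms_def)
  moreover have "measure (\<pi> s \<bind> step_law P r \<beta> U' s) {..x}
      \<le> measure (\<pi> s \<bind> step_law P r \<beta> U s) {..x + \<beta> * D}" for x
    using measurable_space[OF P] U U' le \<beta>
    by (intro measure_bind_mono[OF \<pi> kU' kU] measure_step_law_atMost_shift) auto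
  ultimately show ?thesis
    unfolding T_pi_def using U U' \<tau> by (intro quantile_le_quantile_add) auto
qed

lemma T_star_le_shift:
  assumes P: "(\<lambda>a. P a s) \<in> Act \<rightarrow>\<^sub>M prob_algebra M" and r: "(\<lambda>a. r a s) \<in> borel_measurable Act"
    and A: "A s \<subseteq> space Act" and r_bdd: "bdd_above ((\<lambda>a. r a s) ` A s)"
    and U: "U \<in> borel_measurable M" and U': "U' \<in> borel_measurable M"
    and U'_bdd: "bounded_fun M U'"
    and le: "\<And>s'. s' \<in> space M \<Longrightarrow> U s' \<le> U' s' + D"
    and \<beta>: "0 \<le> \<beta>" and \<tau>: "0 < \<tau>" "\<tau> < 1"
    and attained: "\<exists>a\<in>A s. quantile \<tau> (step_law P r \<beta> U s a) = T_star \<tau> A P r \<beta> U s"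
  shows "T_star \<tau> A P r \<beta> U s \<le> T_star \<tau> A P r \<beta> U' s + \<beta> * D"
proof -
  have P_a: "P a s \<in> space (prob_algebra M)" if "a \<in> A s" for a
    using measurable_space[OF P] A that by blast
  have law: "real_distribution (step_law P r \<beta> V s a)"
    if "a \<in> A s" "V \<in> borel_measurable M" for a V
    using measurable_space[OF step_law_kernel[where P=P and r=r and s=s, OF P r that(2)]] A that(1)
    by (blast intro: real_distribution_of_prob_algebra)
  \<comment> \<open>An upper bound on the quantiles at \<open>U'\<close> is needed because \<open>SUP\<close> of a set of reals
    that is not bounded above is a junk value.\<close>
  obtain R where R: "\<And>a. a \<in> A s \<Longrightarrow> r a s \<le> R" using r_bdd by (auto simp: bdd_above_def)
  obtain B where B: "\<And>s'. s' \<in> space M \<Longrightarrow> \<bar>U' s'\<bar> \<le> B" using U'_bdd by (auto simp: bounded_fun_def)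
  have "quantile \<tau> (step_law P r \<beta> U' s a) \<le> R + \<beta> * B" if a: "a \<in> A s" for a
  proof (rule real_distribution.quantile_le[OF law[OF a U'] \<tau>(1)])
    have "r a s + \<beta> * U' s' \<le> R + \<beta> * B" if "s' \<in> space M" for s'
    proof -
      have "U' s' \<le> B" using B[OF that] by simp
      from add_mono[OF R[OF a] mult_left_mono[OF this \<beta>]] show ?thesis .
    qed
    then have "{s'\<in>space M. r a s + \<beta> * U' s' \<le> R + \<beta> * B} = space (P a s)"
      using P_a[OF a] by (auto simp: space_prob_algebra dest: sets_eq_imp_space_eq)
    then show "\<tau> \<le> measure (step_law P r \<beta> U' s a) {..R + \<beta> * B}"
      using P_a[OF a] \<tau>(2)
      by (simp add: measure_step_law_atMost[where P=P and a=a and s=s, OF P_a[OF a] U']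
          space_prob_algebra prob_space.prob_space)
  qed
  then have "bdd_above ((\<lambda>a. quantile \<tau> (step_law P r \<beta> U' s a)) ` A s)"
    by (intro bdd_aboveI[where M="R + \<beta> * B"]) auto
  moreover have "quantile \<tau> (step_law P r \<beta> U s a) \<le> quantile \<tau> (step_law P r \<beta> U' s a) + \<beta> * D"
    if a: "a \<in> A s" for a
    using law[OF a U] law[OF a U'] \<tau>
      measure_step_law_atMost_shift[where P=P and a=a and s=s, OF P_a[OF a] U U' le \<beta>]
    by (intro quantile_le_quantile_add) auto
  ultimately show ?thesis
    using attained unfolding T_star_def by (intro cSUP_le_cSUP_add) auto
qed

lemma bounded_fun_diff:
  "bounded_fun M f \<Longrightarrow> bounded_fun M g \<Longrightarrow> bounded_fun M (\<lambda>s. f s - g s)"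
proof -
  assume "bounded_fun M f" "bounded_fun M g"
  then obtain B C where "\<And>s. s \<in> space M \<Longrightarrow> \<bar>f s\<bar> \<le> B" "\<And>s. s \<in> space M \<Longrightarrow> \<bar>g s\<bar> \<le> C"
    by (auto simp: bounded_fun_def)
  then have "\<bar>f s - g s\<bar> \<le> B + C" if "s \<in> space M" for s
    using abs_triangle_ineq4[of "f s" "g s"] that by fastforce
  then show ?thesis by (auto simp: bounded_fun_def)
qed

lemma abs_le_supnorm:
  assumes "bounded_fun M f" "s \<in> space M"
  shows "\<bar>f s\<bar> \<le> supnorm M f"
  using assms unfolding supnorm_def bounded_fun_def by (auto intro!: cSUP_upper)

lemma supnorm_le:
  assumes "space M \<noteq> {}" "\<And>s. s \<in> space M \<Longrightarrow> \<bar>f s\<bar> \<le> c"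
  shows "supnorm M f \<le> c"
  unfolding supnorm_def using assms by (rule cSUP_least)

theorem theorem2:
  fixes M :: "'s measure" and Act :: "'a measure"
    and A :: "'s \<Rightarrow> 'a set" and P :: "'a \<Rightarrow> 's \<Rightarrow> 's measure"
    and r :: "'a \<Rightarrow> 's \<Rightarrow> real" and \<beta> \<tau> :: real
    and \<pi> :: "'s \<Rightarrow> 'a measure" and V W :: "'s \<Rightarrow> real"
  assumes M_ne: "space M \<noteq> {}"
    and A_sub: "\<And>s. s \<in> space M \<Longrightarrow> A s \<subseteq> space Act"
    and A_ne: "\<And>s. s \<in> space M \<Longrightarrow> A s \<noteq> {}"
    and P_kernel: "\<And>s. s \<in> space M \<Longrightarrow> (\<lambda>a. P a s) \<in> Act \<rightarrow>\<^sub>M prob_algebra M"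
    and r_meas: "\<And>s. s \<in> space M \<Longrightarrow> (\<lambda>a. r a s) \<in> borel_measurable Act"
    and r_bdd: "\<exists>B. \<forall>s\<in>space M. \<forall>a\<in>space Act. \<bar>r a s\<bar> \<le> B"
    and beta: "0 < \<beta>" "\<beta> < 1"
    and tau: "0 < \<tau>" "\<tau> < 1"
    and pi_prob: "\<And>s. s \<in> space M \<Longrightarrow> prob_space (\<pi> s)"
    and pi_sets: "\<And>s. s \<in> space M \<Longrightarrow> sets (\<pi> s) = sets Act"
    and pi_supp: "\<And>s. s \<in> space M \<Longrightarrow> AE a in \<pi> s. a \<in> A s"
    and V_meas: "V \<in> borel_measurable M" and V_bdd: "bounded_fun M V"
    and W_meas: "W \<in> borel_measurable M" and W_bdd: "bounded_fun M W"
    and max_V: "\<And>s. s \<in> space M \<Longrightarrow> \<exists>a\<in>A s.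
                  quantile \<tau> (step_law P r \<beta> V s a) = T_star \<tau> A P r \<beta> V s"
    and max_W: "\<And>s. s \<in> space M \<Longrightarrow> \<exists>a\<in>A s.
                  quantile \<tau> (step_law P r \<beta> W s a) = T_star \<tau> A P r \<beta> W s"
  shows "supnorm M (\<lambda>s. T_pi \<tau> \<pi> P r \<beta> V s - T_pi \<tau> \<pi> P r \<beta> W s)
           \<le> \<beta> * supnorm M (\<lambda>s. V s - W s)
       \<and> supnorm M (\<lambda>s. T_star \<tau> A P r \<beta> V s - T_star \<tau> A P r \<beta> W s)
           \<le> \<beta> * supnorm M (\<lambda>s. V s - W s)"
proof -
  define D where "D = supnorm M (\<lambda>s. V s - W s)"
  have VW: "V s \<le> W s + D" "W s \<le> V s + D" if "s \<in> space M" for s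
    using abs_le_supnorm[OF bounded_fun_diff[OF V_bdd W_bdd] that] unfolding D_def by auto
  have \<pi>: "\<pi> s \<in> space (prob_algebra Act)" if "s \<in> space M" for s
    using pi_prob[OF that] pi_sets[OF that] by (simp add: space_prob_algebra)
  obtain B where B: "\<And>s a. s \<in> space M \<Longrightarrow> a \<in> space Act \<Longrightarrow> \<bar>r a s\<bar> \<le> B"
    using r_bdd by blast
  have r_bdd_above: "bdd_above ((\<lambda>a. r a s) ` A s)" if "s \<in> space M" for s
    using B[OF that] A_sub[OF that] by (intro bdd_aboveI[where M=B]) (auto simp: abs_le_iff)
  have pi_shift: "T_pi \<tau> \<pi> P r \<beta> U s \<le> T_pi \<tau> \<pi> P r \<beta> U' s + \<beta> * D"
    if s: "s \<in> space M" and "U \<in> borel_measurable M" "U' \<in> borel_measurable M"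
      and "\<And>s'. s' \<in> space M \<Longrightarrow> U s' \<le> U' s' + D" for s U U'
    using P_kernel[OF s] r_meas[OF s] \<pi>[OF s] that beta tau by (intro T_pi_le_shift) auto
  have star_shift: "T_star \<tau> A P r \<beta> U s \<le> T_star \<tau> A P r \<beta> U' s + \<beta> * D"
    if s: "s \<in> space M" and "U \<in> borel_measurable M" "U' \<in> borel_measurable M" "bounded_fun M U'"
      and "\<And>s'. s' \<in> space M \<Longrightarrow> U s' \<le> U' s' + D"
      and "\<exists>a\<in>A s. quantile \<tau> (step_law P r \<beta> U s a) = T_star \<tau> A P r \<beta> U s" for s U U'
    using P_kernel[OF s] r_meas[OF s] A_sub[OF s] r_bdd_above[OF s] that beta tau
    by (intro T_star_le_shift) auto
  have "\<bar>T_pi \<tau> \<pi> P r \<beta> V s - T_pi \<tau> \<pi> P r \<beta> W s\<bar> \<le> \<beta> * D" if s: "s \<in> space M" for s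
    using pi_shift[OF s V_meas W_meas VW(1)] pi_shift[OF s W_meas V_meas VW(2)]
    by (simp add: abs_le_iff)
  moreover have "\<bar>T_star \<tau> A P r \<beta> V s - T_star \<tau> A P r \<beta> W s\<bar> \<le> \<beta> * D" if s: "s \<in> space M" for s
    using star_shift[OF s V_meas W_meas W_bdd VW(1) max_V[OF s]]
      star_shift[OF s W_meas V_meas V_bdd VW(2) max_W[OF s]]
    by (simp add: abs_le_iff)
  ultimately show ?thesis
    unfolding D_def by (auto intro: supnorm_le[OF M_ne])
qed

end
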